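(* For any signed graphs $(G,\sigma)$ and $(H,\tau)$, $$\chi_c\big((G,\sigma)\square'(H,\tau)\big)\le 2\max\{\chi_c(G),\chi_c(H)\},$$ where $\chi_c(G),\chi_c(H)$ are the circular chromatic numbers of the underlying unsigned graphs.
   Context: A signed graph $(G,\sigma)$ is a finite graph $G$ (multiple edges allowed, no loops) with a signature $\sigma:E(G)\to\{+1,-1\}$. For real $r\ge 2$, $C^r$ is the circle of circumference $r$, $d_{C^r}(x,y)=\min\{|x-y|,r-|x-y|\}$, $\overline{x}=x+r/2\pmod r$. A circular $r$-coloring of $(G,\sigma)$ is $f:V(G)\to C^r$ with $d_{C^r}(f(u),f(v))\ge1$ for each positive edge $uv$ and $d_{C^r}(f(u),\overline{f(v)})\ge1$ for each negative edge $uv$; $\chi_c(G,\sigma)$ is the infimum of such $r\ge2$. For an unsigned graph $G$, a circular $r$-coloring requires $d_{C^r}(f(u),f(v))\ge1$ for every edge, and $\chi_c(G)$ is the infimum of such $r$. Vertex signs: fix an orientation of $G$; for $u\in V(G)$ let $\sigma(u)=\prod_{e\in E_u}\sigma(e)^{\epsilon(e,u)}$, where $E_u$ is the set of edges incident to $u$ and $\epsilon(e,u)=1$ if $e$ is oriented away from $u$ and $-1$ otherwise; similarly $\tau(x)$ for $x\in V(H)$. The Type 2 Cartesian product $(G,\sigma)\square'(H,\tau)$ has vertex set $V(G)\times V(H)$, with $(u,x)(v,y)$ an edge iff either $u=v$ and $xy\in E(H)$, or $x=y$ and $uv\in E(G)$; the edge $(u,x)(v,x)$ has sign $\sigma(uv)\tau(x)$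 and the edge $(u,x)(u,y)$ has sign $\sigma(u)\tau(xy)$. *)

theory Defs
  imports Complex_Main
begin

text \<open>A signed (multi)graph with a fixed orientation: vertex set V, edge set E,
  each edge e oriented from src e to tgt e (no loops), signature sg e in {1,-1}.\<close>

definition signed_graph ::
  "'a set \<Rightarrow> 'e set \<Rightarrow> ('e \<Rightarrow> 'a) \<Rightarrow> ('e \<Rightarrow> 'a) \<Rightarrow> ('e \<Rightarrow> real) \<Rightarrow> bool" where
  "signed_graph V E src tgt sg \<longleftrightarrow> finite V \<and> finite E \<and>
     (\<forall>e\<in>E. src e \<in> V \<and> tgt e \<in> V \<and> src e \<noteq> tgt e \<and> (sg e = 1 \<or> sg e = -1))"

definition vertex_sign ::
  "'e set \<Rightarrow> ('e \<Rightarrow> 'a) \<Rightarrow> ('e \<Rightarrow> 'a) \<Rightarrow> ('e \<Rightarrow> real) \<Rightarrow> 'a \<Rightarrow> real" where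
  "vertex_sign E src tgt sg u =
     (\<Prod>e\<in>{e\<in>E. src e = u \<or> tgt e = u}. sg e powi (if src e = u then 1 else -1))"

text \<open>The circle C^r represented by [0,r).\<close>
definition circ_dist :: "real \<Rightarrow> real \<Rightarrow> real \<Rightarrow> real" where
  "circ_dist r x y = min \<bar>x - y\<bar> (r - \<bar>x - y\<bar>)"

definition circ_bar :: "real \<Rightarrow> real \<Rightarrow> real" where
  "circ_bar r x = (if x + r / 2 < r then x + r / 2 else x + r / 2 - r)"

definition signed_circ_coloring ::
  "'a set \<Rightarrow> 'e set \<Rightarrow> ('e \<Rightarrow> 'a) \<Rightarrow> ('e \<Rightarrow> 'a) \<Rightarrow> ('e \<Rightarrow> real) \<Rightarrow> real \<Rightarrow> ('a \<Rightarrow> real) \<Rightarrow> bool" where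
  "signed_circ_coloring V E src tgt sg r f \<longleftrightarrow> 2 \<le> r \<and> (\<forall>v\<in>V. f v \<in> {0..<r}) \<and>
     (\<forall>e\<in>E. (sg e = 1 \<longrightarrow> 1 \<le> circ_dist r (f (src e)) (f (tgt e))) \<and>
             (sg e = -1 \<longrightarrow> 1 \<le> circ_dist r (f (src e)) (circ_bar r (f (tgt e)))))"

definition signed_chi_c ::
  "'a set \<Rightarrow> 'e set \<Rightarrow> ('e \<Rightarrow> 'a) \<Rightarrow> ('e \<Rightarrow> 'a) \<Rightarrow> ('e \<Rightarrow> real) \<Rightarrow> real" where
  "signed_chi_c V E src tgt sg = Inf {r. \<exists>f. signed_circ_coloring V E src tgt sg r f}"

definition circ_coloring ::
  "'a set \<Rightarrow> 'e set \<Rightarrow> ('e \<Rightarrow> 'a) \<Rightarrow> ('e \<Rightarrow> 'a) \<Rightarrow> real \<Rightarrow> ('a \<Rightarrow> real) \<Rightarrow> bool" where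
  "circ_coloring V E src tgt r f \<longleftrightarrow> 2 \<le> r \<and> (\<forall>v\<in>V. f v \<in> {0..<r}) \<and>
     (\<forall>e\<in>E. 1 \<le> circ_dist r (f (src e)) (f (tgt e)))"

definition chi_c :: "'a set \<Rightarrow> 'e set \<Rightarrow> ('e \<Rightarrow> 'a) \<Rightarrow> ('e \<Rightarrow> 'a) \<Rightarrow> real" where
  "chi_c V E src tgt = Inf {r. \<exists>f. circ_coloring V E src tgt r f}"

text \<open>Type 2 Cartesian product. Edges: Inl (e,x) = (src e,x)(tgt e,x); Inr (u,f) = (u,src f)(u,tgt f).\<close>
definition prod_edges :: "'a set \<Rightarrow> 'e set \<Rightarrow> 'b set \<Rightarrow> 'f set \<Rightarrow> (('e \<times> 'b) + ('a \<times> 'f)) set" where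
  "prod_edges V1 E1 V2 E2 = (E1 \<times> V2) <+> (V1 \<times> E2)"

definition prod_src :: "('e \<Rightarrow> 'a) \<Rightarrow> ('f \<Rightarrow> 'b) \<Rightarrow> ('e \<times> 'b) + ('a \<times> 'f) \<Rightarrow> 'a \<times> 'b" where
  "prod_src src1 src2 d = (case d of Inl (e, x) \<Rightarrow> (src1 e, x) | Inr (u, f) \<Rightarrow> (u, src2 f))"

definition prod_tgt :: "('e \<Rightarrow> 'a) \<Rightarrow> ('f \<Rightarrow> 'b) \<Rightarrow> ('e \<times> 'b) + ('a \<times> 'f) \<Rightarrow> 'a \<times> 'b" where
  "prod_tgt tgt1 tgt2 d = (case d of Inl (e, x) \<Rightarrow> (tgt1 e, x) | Inr (u, f) \<Rightarrow> (u, tgt2 f))"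

definition prod2_sign ::
  "'e set \<Rightarrow> ('e \<Rightarrow> 'a) \<Rightarrow> ('e \<Rightarrow> 'a) \<Rightarrow> ('e \<Rightarrow> real) \<Rightarrow>
   'f set \<Rightarrow> ('f \<Rightarrow> 'b) \<Rightarrow> ('f \<Rightarrow> 'b) \<Rightarrow> ('f \<Rightarrow> real) \<Rightarrow> ('e \<times> 'b) + ('a \<times> 'f) \<Rightarrow> real" where
  "prod2_sign E1 src1 tgt1 sg E2 src2 tgt2 tau d = (case d of
      Inl (e, x) \<Rightarrow> sg e * vertex_sign E2 src2 tgt2 tau x
    | Inr (u, f) \<Rightarrow> vertex_sign E1 src1 tgt1 sg u * tau f)"

end

theory Submission
  imports Defs
begin

text \<open>If \<open>\<phi>\<close> and \<open>\<psi>\<close> are circular \<open>r\<close>-colourings of \<open>G\<close> and \<open>H\<close> with values in \<open>[0,r)\<close>,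
  then \<open>(u,x) \<mapsto> \<phi> u + \<psi> x mod r\<close> is a circular \<open>r\<close>-colouring of the unsigned product, because
  translations are isometries of \<open>C\<^sup>r\<close>. Read in \<open>C\<^sup>2\<^sup>r\<close>, any colouring with values in the half
  circle \<open>[0,r)\<close> is a \<open>2r\<close>-colouring for every signature whatsoever, so the vertex signs of the
  product play no role.\<close>

definition circ_add :: "real \<Rightarrow> real \<Rightarrow> real \<Rightarrow> real" where
  "circ_add r a b = (if a + b < r then a + b else a + b - r)"

lemma circ_add_range: "a \<in> {0..<r} \<Longrightarrow> b \<in> {0..<r} \<Longrightarrow> circ_add r a b \<in> {0..<r}"
  unfolding circ_add_def by auto

lemma circ_add_commute: "circ_add r a b = circ_add r b a"
  unfolding circ_add_def by (simp add: add.commute)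

lemma circ_dist_circ_add_right:
  assumes "a \<in> {0..<r}" "b \<in> {0..<r}" "c \<in> {0..<r}"
  shows "circ_dist r (circ_add r a c) (circ_add r b c) = circ_dist r a b"
  using assms unfolding circ_add_def circ_dist_def by (auto simp: abs_if min_def)

lemma circ_dist_mono:
  assumes "a \<in> {0..<r}" "b \<in> {0..<r}" "r \<le> s" "1 \<le> circ_dist r a b"
  shows "1 \<le> circ_dist s a b"
  using assms unfolding circ_dist_def by (auto simp: abs_if min_def split: if_splits)

text \<open>For \<open>a, b \<in> [0,r)\<close> the antipode of \<open>b\<close> in \<open>C\<^sup>2\<^sup>r\<close> is \<open>b + r\<close>, at distance \<open>r - \<bar>a - b\<bar>\<close> from \<open>a\<close>.\<close>

lemma circ_dist_double:
  assumes "a \<in> {0..<r}" "b \<in> {0..<r}" "1 \<le> circ_dist r a b"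
  shows "1 \<le> circ_dist (2 * r) a b"
    and "1 \<le> circ_dist (2 * r) a (circ_bar (2 * r) b)"
  using assms unfolding circ_dist_def circ_bar_def by (auto simp: abs_if min_def split: if_splits)

lemma circ_coloring_mono:
  assumes "circ_coloring V E src tgt r f" "r \<le> s" "\<forall>e\<in>E. src e \<in> V \<and> tgt e \<in> V"
  shows "circ_coloring V E src tgt s f"
  using assms unfolding circ_coloring_def by (auto intro: circ_dist_mono[of _ r _ s])

lemma signed_circ_coloring_double:
  assumes "circ_coloring V E src tgt r f" "\<forall>e\<in>E. src e \<in> V \<and> tgt e \<in> V"
  shows "signed_circ_coloring V E src tgt sg (2 * r) f"
  using assms circ_dist_double[of "f (src e)" r "f (tgt e)" for e]
  unfolding circ_coloring_def signed_circ_coloring_def by auto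

lemma bdd_below_circ_colorings: "bdd_below {r. \<exists>f. circ_coloring V E src tgt r f}"
  unfolding circ_coloring_def bdd_below_def by auto

lemma bdd_below_signed_circ_colorings: "bdd_below {r. \<exists>f. signed_circ_coloring V E src tgt sg r f}"
  unfolding signed_circ_coloring_def bdd_below_def by auto

lemma circ_coloring_exists:
  assumes "finite V" and loopless: "\<forall>e\<in>E. src e \<in> V \<and> tgt e \<in> V \<and> src e \<noteq> tgt e"
  shows "\<exists>r f. circ_coloring V E src tgt r f"
proof -
  obtain h where h: "bij_betw h V {0..<card V}" using ex_bij_betw_finite_nat[OF \<open>finite V\<close>] by blast
  define r where "r = max 2 (real (card V))"
  have "circ_coloring V E src tgt r (\<lambda>v. real (h v))"
    unfolding circ_coloring_def
  proof (intro conjI ballI)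
    show "2 \<le> r" unfolding r_def by simp
  next
    fix v assume "v \<in> V"
    then have "h v < card V" using h by (auto simp: bij_betw_def)
    then show "real (h v) \<in> {0..<r}" unfolding r_def by auto
  next
    fix e assume "e \<in> E"
    then have ends: "src e \<in> V" "tgt e \<in> V" "src e \<noteq> tgt e" using loopless by auto
    then have "h (src e) \<noteq> h (tgt e)" using h by (auto simp: bij_betw_def inj_on_def)
    moreover have "h (src e) < card V" "h (tgt e) < card V" using ends h by (auto simp: bij_betw_def)
    ultimately have "1 \<le> \<bar>real (h (src e)) - real (h (tgt e))\<bar>"
      and "\<bar>real (h (src e)) - real (h (tgt e))\<bar> \<le> real (card V) - 1"
      by (auto simp: abs_if)
    then show "1 \<le> circ_dist r (real (h (src e))) (real (h (tgt e)))"
      unfolding circ_dist_def r_def by auto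
  qed
  then show ?thesis by blast
qed

lemma circ_coloring_prod:
  assumes phi: "circ_coloring V1 E1 src1 tgt1 r phi" and psi: "circ_coloring V2 E2 src2 tgt2 r psi"
    and ends1: "\<forall>e\<in>E1. src1 e \<in> V1 \<and> tgt1 e \<in> V1"
    and ends2: "\<forall>e\<in>E2. src2 e \<in> V2 \<and> tgt2 e \<in> V2"
  shows "circ_coloring (V1 \<times> V2) (prod_edges V1 E1 V2 E2) (prod_src src1 src2) (prod_tgt tgt1 tgt2) r
           (\<lambda>(u, x). circ_add r (phi u) (psi x))"
  unfolding circ_coloring_def
proof (intro conjI ballI)
  show "2 \<le> r" using phi unfolding circ_coloring_def by auto
next
  fix v assume "v \<in> V1 \<times> V2"
  then show "(\<lambda>(u, x). circ_add r (phi u) (psi x)) v \<in> {0..<r}"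
    using phi psi circ_add_range unfolding circ_coloring_def by auto
next
  fix d assume d: "d \<in> prod_edges V1 E1 V2 E2"
  show "1 \<le> circ_dist r ((\<lambda>(u, x). circ_add r (phi u) (psi x)) (prod_src src1 src2 d))
                        ((\<lambda>(u, x). circ_add r (phi u) (psi x)) (prod_tgt tgt1 tgt2 d))"
  proof (cases d)
    case (Inl p)
    then obtain e x where "d = Inl (e, x)" "e \<in> E1" "x \<in> V2"
      using d unfolding prod_edges_def by (cases p) auto
    then show ?thesis
      using ends1 phi psi circ_dist_circ_add_right[of "phi (src1 e)" r "phi (tgt1 e)" "psi x"]
      unfolding circ_coloring_def prod_src_def prod_tgt_def by auto
  next
    case (Inr p)
    then obtain u f where "d = Inr (u, f)" "u \<in> V1" "f \<in> E2"
      using d unfolding prod_edges_def by (cases p) auto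
    then show ?thesis
      using ends2 phi psi circ_dist_circ_add_right[of "psi (src2 f)" r "psi (tgt2 f)" "phi u"]
      unfolding circ_coloring_def prod_src_def prod_tgt_def by (auto simp: circ_add_commute)
  qed
qed

lemma prod_edges_ends:
  assumes "\<forall>e\<in>E1. src1 e \<in> V1 \<and> tgt1 e \<in> V1" "\<forall>e\<in>E2. src2 e \<in> V2 \<and> tgt2 e \<in> V2"
  shows "\<forall>d\<in>prod_edges V1 E1 V2 E2.
           prod_src src1 src2 d \<in> V1 \<times> V2 \<and> prod_tgt tgt1 tgt2 d \<in> V1 \<times> V2"
  using assms unfolding prod_edges_def prod_src_def prod_tgt_def by auto

lemma signed_circ_coloring_prod:
  assumes "circ_coloring V1 E1 src1 tgt1 r1 phi" "circ_coloring V2 E2 src2 tgt2 r2 psi"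
    and ends1: "\<forall>e\<in>E1. src1 e \<in> V1 \<and> tgt1 e \<in> V1"
    and ends2: "\<forall>e\<in>E2. src2 e \<in> V2 \<and> tgt2 e \<in> V2"
  shows "\<exists>F. signed_circ_coloring (V1 \<times> V2) (prod_edges V1 E1 V2 E2) (prod_src src1 src2)
           (prod_tgt tgt1 tgt2) sg (2 * max r1 r2) F"
proof -
  have "circ_coloring V1 E1 src1 tgt1 (max r1 r2) phi"
    and "circ_coloring V2 E2 src2 tgt2 (max r1 r2) psi"
    using circ_coloring_mono[OF assms(1) _ ends1] circ_coloring_mono[OF assms(2) _ ends2] by simp_all
  from circ_coloring_prod[OF this ends1 ends2] prod_edges_ends[OF ends1 ends2]
  show ?thesis by (blast intro: signed_circ_coloring_double)
qed

lemma cInf_le_double_max: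
  fixes A B S :: "real set"
  assumes "A \<noteq> {}" "bdd_below A" "B \<noteq> {}" "bdd_below B" "bdd_below S"
    and mem: "\<And>a b. a \<in> A \<Longrightarrow> b \<in> B \<Longrightarrow> 2 * max a b \<in> S"
  shows "Inf S \<le> 2 * max (Inf A) (Inf B)"
proof (rule ccontr)
  assume "\<not> ?thesis"
  then have "Inf A < Inf S / 2" "Inf B < Inf S / 2" by auto
  then obtain a b where a: "a \<in> A" "a < Inf S / 2" and b: "b \<in> B" "b < Inf S / 2"
    using cInf_less_iff[OF assms(1,2)] cInf_less_iff[OF assms(3,4)] by blast
  have "Inf S \<le> 2 * max a b" using cInf_lower[OF mem[OF a(1) b(1)] \<open>bdd_below S\<close>] .
  with a b show False by auto
qed

theorem theorem3:
  fixes V1 :: "'a set" and E1 :: "'e set" and src1 tgt1 :: "'e \<Rightarrow> 'a" and sg :: "'e \<Rightarrow> real"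
    and V2 :: "'b set" and E2 :: "'f set" and src2 tgt2 :: "'f \<Rightarrow> 'b" and tau :: "'f \<Rightarrow> real"
  assumes "signed_graph V1 E1 src1 tgt1 sg"
    and "signed_graph V2 E2 src2 tgt2 tau"
  shows "signed_chi_c (V1 \<times> V2) (prod_edges V1 E1 V2 E2) (prod_src src1 src2) (prod_tgt tgt1 tgt2)
            (prod2_sign E1 src1 tgt1 sg E2 src2 tgt2 tau)
         \<le> 2 * max (chi_c V1 E1 src1 tgt1) (chi_c V2 E2 src2 tgt2)"
proof -
  have ends1: "\<forall>e\<in>E1. src1 e \<in> V1 \<and> tgt1 e \<in> V1"
    and ends2: "\<forall>e\<in>E2. src2 e \<in> V2 \<and> tgt2 e \<in> V2"
    using assms unfolding signed_graph_def by auto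
  have nonempty1: "{r. \<exists>f. circ_coloring V1 E1 src1 tgt1 r f} \<noteq> {}"
    using assms(1) circ_coloring_exists[of V1 E1 src1 tgt1] unfolding signed_graph_def by auto
  have nonempty2: "{r. \<exists>f. circ_coloring V2 E2 src2 tgt2 r f} \<noteq> {}"
    using assms(2) circ_coloring_exists[of V2 E2 src2 tgt2] unfolding signed_graph_def by auto
  have doubled_max: "2 * max r1 r2 \<in> {r. \<exists>F. signed_circ_coloring (V1 \<times> V2) (prod_edges V1 E1 V2 E2)
      (prod_src src1 src2) (prod_tgt tgt1 tgt2) (prod2_sign E1 src1 tgt1 sg E2 src2 tgt2 tau) r F}"
    if "r1 \<in> {r. \<exists>f. circ_coloring V1 E1 src1 tgt1 r f}"
      and "r2 \<in> {r. \<exists>f. circ_coloring V2 E2 src2 tgt2 r f}"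
    for r1 r2
    using that by (auto intro: signed_circ_coloring_prod[OF _ _ ends1 ends2])
  show ?thesis
    unfolding signed_chi_c_def chi_c_def
    by (rule cInf_le_double_max[OF nonempty1 bdd_below_circ_colorings nonempty2
          bdd_below_circ_colorings bdd_below_signed_circ_colorings doubled_max])
qed

end
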